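(* Let $a,b\in\mathbb{N}$ with $a+b$ even, and let $n$ be a positive integer. Then $$2n\ \Big|\ \sum_{k=0}^{n-1}\binom{n-1}{k}^a\binom{-n-1}{k}^b\binom{2k}{k}(k+2)3^{n-1-k}.$$
   Context: $\binom{x}{k}=x(x-1)\cdots(x-k+1)/k!$ for any integer $x$. *)

theory Defs
  imports Complex_Main
begin

end

theory Submission
  imports Defs
begin

(* With u k = (-1)^k C(n-1,k) and y k = C(n+k,k), both (k+1)(u(k+1) - u k) and (k+1)(y(k+1) - y k)
   are multiples of n, hence so is (k+1)(w(k+1) - w k) for w = u^a y^b, which for even a + b is the
   product of the first two binomials of the sum. The remaining factor C(2k,k)(k+2)3^(n-1-k) is the
   difference v(k+1) - v k of v k = k C(2k,k) 3^(n-k). As v 0 = 0, summation by parts turns the sum into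
   w n v n minus a sum of terms v(k+1)(w(k+1) - w k); since k C(2k,k) is even, every one of these
   is divisible by 2n. *)

lemma sum_lessThan_by_parts:
  fixes f g :: "nat \<Rightarrow> 'a::comm_ring"
  shows "(\<Sum>k<n. f k * (g (Suc k) - g k))
    = f n * g n - f 0 * g 0 - (\<Sum>k<n. g (Suc k) * (f (Suc k) - f k))"
  by (induction n) (simp_all add: algebra_simps)

lemma dvd_mult_diff_mult:
  fixes c d p q r s :: "'a::comm_ring_1"
  assumes "d dvd c * (p - q)" and "d dvd c * (r - s)"
  shows "d dvd c * (p * r - q * s)"
proof -
  have "c * (p * r - q * s) = r * (c * (p - q)) + q * (c * (r - s))"
    by (simp add: algebra_simps)
  with assms show ?thesis by simp
qed

lemma dvd_mult_diff_power:
  fixes c d p q :: "'a::comm_ring_1"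
  assumes "d dvd c * (p - q)"
  shows "d dvd c * (p ^ a - q ^ a)"
  by (induction a) (simp_all add: dvd_mult_diff_mult[OF assms])

lemma binomial_odd_Suc_half: "2 * k + 1 choose Suc k = 2 * k + 1 choose k"
  using binomial_symmetric[of "Suc k" "2 * k + 1"] by simp

lemma central_binomial_Suc: "2 * Suc k choose Suc k = 2 * (2 * k + 1 choose k)"
  using binomial_odd_Suc_half[of k] by simp

lemma Suc_times_central_binomial_Suc:
  "Suc k * (2 * Suc k choose Suc k) = 2 * (2 * k + 1) * (2 * k choose k)"
proof -
  have "Suc (2 * k) * (2 * k choose k) = (Suc (2 * k) choose Suc k) * Suc k"
    by (rule Suc_times_binomial_eq)
  then have "(2 * k + 1) * (2 * k choose k) = (2 * k + 1 choose k) * Suc k"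
    using binomial_odd_Suc_half[of k] by simp
  then show ?thesis
    by (simp only: central_binomial_Suc mult.assoc) simp
qed

lemma Suc_times_alternating_binomial_diff:
  "int (Suc j) * ((-1) ^ Suc j * int (N choose Suc j) - (-1) ^ j * int (N choose j))
    = (-1) ^ Suc j * (int (Suc N) * int (N choose j))"
proof -
  have "int (Suc j) * ((-1) ^ Suc j * int (N choose Suc j) - (-1) ^ j * int (N choose j))
    = (-1) ^ Suc j * (int (Suc j) * (int (N choose j) + int (N choose Suc j)))"
    by (simp add: algebra_simps)
  also have "int (Suc j) * (int (N choose j) + int (N choose Suc j)) = int (Suc N) * int (N choose j)"
    using Suc_times_binomial[of j N]
    by (simp only: binomial_Suc_Suc of_nat_add [symmetric] of_nat_mult [symmetric])
  finally show ?thesis .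
qed

lemma Suc_times_binomial_diff:
  "int (Suc j) * (int (n + Suc j choose Suc j) - int (n + j choose j)) = int n * int (n + j choose j)"
proof -
  have "int (Suc j * (n + Suc j choose Suc j)) = int (Suc (n + j) * (n + j choose j))"
    using Suc_times_binomial[of j "n + j"] by (simp only: add_Suc_right)
  then show ?thesis by (simp add: algebra_simps)
qed

lemma gbinomial_minus_of_nat_minus_one:
  "((- of_nat n - 1) gchoose k :: 'a::field_char_0) = (-1) ^ k * of_nat (n + k choose k)"
proof -
  have "(- of_nat n - 1 :: 'a) = - (of_nat n + 1)" by simp
  then have "((- of_nat n - 1) gchoose k :: 'a) = (-1) ^ k * ((of_nat n + 1 + of_nat k - 1) gchoose k)"
    using gbinomial_minus[of "of_nat n + 1 :: 'a" k] by simp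
  also have "(of_nat n + 1 + of_nat k - 1 :: 'a) = of_nat (n + k)" by simp
  finally show ?thesis by (simp add: binomial_gbinomial)
qed

definition binomial_weight :: "nat \<Rightarrow> nat \<Rightarrow> nat \<Rightarrow> nat \<Rightarrow> int" where
  "binomial_weight a b n k = ((-1) ^ k * int (n - 1 choose k)) ^ a * int (n + k choose k) ^ b"

definition central_potential :: "nat \<Rightarrow> nat \<Rightarrow> int" where
  "central_potential n k = int (k * (2 * k choose k)) * 3 ^ (n - k)"

lemma of_int_binomial_weight:
  assumes "even (a + b)"
  shows "(of_int (binomial_weight a b n k) :: 'a::field_char_0)
    = (of_nat (n - 1) gchoose k) ^ a * ((- of_nat n - 1) gchoose k) ^ b"
proof -
  have "((-1::'a) ^ k) ^ a = ((-1) ^ k) ^ b"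
    using assms by (simp add: power_mult[symmetric] minus_one_power_iff)
  then show ?thesis
    by (simp add: binomial_weight_def gbinomial_minus_of_nat_minus_one binomial_gbinomial power_mult_distrib)
qed

lemma dvd_Suc_times_binomial_weight_diff:
  assumes "n > 0"
  shows "int n dvd int (Suc k) * (binomial_weight a b n (Suc k) - binomial_weight a b n k)"
proof -
  obtain N where N: "n = Suc N" using assms by (cases n) auto
  have "int n dvd int (Suc k) * ((-1) ^ Suc k * int (n - 1 choose Suc k) - (-1) ^ k * int (n - 1 choose k))"
    using Suc_times_alternating_binomial_diff[of k N] by (simp add: N)
  then have "int n dvd int (Suc k) * (((-1) ^ Suc k * int (n - 1 choose Suc k)) ^ a
      - ((-1) ^ k * int (n - 1 choose k)) ^ a)"
    by (rule dvd_mult_diff_power)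
  moreover have "int n dvd int (Suc k) * (int (n + Suc k choose Suc k) ^ b - int (n + k choose k) ^ b)"
    using Suc_times_binomial_diff[of k n] by (intro dvd_mult_diff_power) simp
  ultimately show ?thesis
    unfolding binomial_weight_def by (rule dvd_mult_diff_mult)
qed

lemma central_potential_diff:
  assumes "k < n"
  shows "central_potential n (Suc k) - central_potential n k
    = int (2 * k choose k) * (int k + 2) * 3 ^ (n - 1 - k)"
proof -
  obtain r where r: "n - k = Suc r" "n - Suc k = r" "n - 1 - k = r"
    using assms by (metis Suc_diff_Suc diff_Suc_eq_diff_pred)
  have "int (Suc k * (2 * Suc k choose Suc k)) = 2 * (2 * int k + 1) * int (2 * k choose k)"
    by (simp only: Suc_times_central_binomial_Suc of_nat_mult of_nat_add of_nat_1 of_nat_numeral)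
  then have "central_potential n (Suc k) = 2 * (2 * int k + 1) * int (2 * k choose k) * 3 ^ r"
    by (simp only: central_potential_def r)
  moreover have "central_potential n k = 3 * int k * int (2 * k choose k) * 3 ^ r"
    by (simp add: central_potential_def r)
  ultimately show ?thesis
    by (simp add: r algebra_simps)
qed

lemma dvd_central_potential_mult_weight_diff:
  assumes "n > 0"
  shows "2 * int n dvd central_potential n (Suc k)
    * (binomial_weight a b n (Suc k) - binomial_weight a b n k)"
proof -
  have "central_potential n (Suc k) = 2 * int (Suc k) * (int (2 * k + 1 choose k) * 3 ^ (n - Suc k))"
    unfolding central_potential_def central_binomial_Suc by (simp add: algebra_simps)
  then have "central_potential n (Suc k) * (binomial_weight a b n (Suc k) - binomial_weight a b n k)
    = (int (2 * k + 1 choose k) * 3 ^ (n - Suc k))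
      * (2 * (int (Suc k) * (binomial_weight a b n (Suc k) - binomial_weight a b n k)))"
    by (simp add: algebra_simps)
  also have "2 * int n dvd \<dots>"
    using mult_dvd_mono[OF dvd_refl dvd_Suc_times_binomial_weight_diff[OF assms]] by (rule dvd_mult)
  finally show ?thesis .
qed

lemma dvd_central_potential_self:
  assumes "n > 0"
  shows "2 * int n dvd central_potential n n"
proof -
  obtain N where N: "n = Suc N" using assms by (cases n) auto
  have "central_potential n n = 2 * int n * int (2 * N + 1 choose N)"
    unfolding N central_potential_def central_binomial_Suc by (simp add: algebra_simps)
  then show ?thesis by simp
qed

lemma dvd_sum_binomial_weight_mult_potential_diff:
  assumes "n > 0"
  shows "2 * int n dvd (\<Sum>k<n. binomial_weight a b n k
    * (central_potential n (Suc k) - central_potential n k))"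
proof -
  let ?w = "binomial_weight a b n" and ?v = "central_potential n"
  have "(\<Sum>k<n. ?w k * (?v (Suc k) - ?v k))
      = ?w n * ?v n - (\<Sum>k<n. ?v (Suc k) * (?w (Suc k) - ?w k))"
    by (simp add: sum_lessThan_by_parts central_potential_def[of n 0])
  also have "2 * int n dvd \<dots>"
    using dvd_central_potential_self[OF assms] dvd_central_potential_mult_weight_diff[OF assms]
    by (blast intro: dvd_diff dvd_mult dvd_sum)
  finally show ?thesis .
qed

lemma summand_eq_binomial_weight_mult_potential_diff:
  assumes "even (a + b)" and "k < n"
  shows "(of_int (int (n - 1)) gchoose k) ^ a * (of_int (- int n - 1) gchoose k) ^ b
      * (of_int (2 * int k) gchoose k) * of_int (int k + 2) * 3 ^ (n - 1 - k)
    = (of_int (binomial_weight a b n k * (central_potential n (Suc k) - central_potential n k))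
        :: 'a::field_char_0)"
proof -
  have "(of_int (int (n - 1)) gchoose k) ^ a * (of_int (- int n - 1) gchoose k) ^ b
      = (of_int (binomial_weight a b n k) :: 'a)"
    by (simp add: of_int_binomial_weight[OF assms(1)])
  moreover have "(of_int (2 * int k) gchoose k :: 'a) = of_nat (2 * k choose k)"
    by (simp add: binomial_gbinomial)
  then have "(of_int (2 * int k) gchoose k :: 'a) * of_int (int k + 2) * 3 ^ (n - 1 - k)
      = of_int (central_potential n (Suc k) - central_potential n k)"
    using central_potential_diff[OF assms(2)] by simp
  ultimately show ?thesis
    by (metis mult.assoc of_int_mult)
qed

theorem lemma3p4:
  fixes a b n :: nat
  assumes "even (a + b)" and "n > 0"
  shows "\<exists>m::int. (\<Sum>k = 0..n - 1. (of_int (int (n - 1)) gchoose k) ^ a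
        * (of_int (- int n - 1) gchoose k) ^ b
        * (of_int (2 * int k) gchoose k) * of_int (int k + 2) * 3 ^ (n - 1 - k))
      = (of_int (2 * int n * m) :: rat)"
proof -
  let ?w = "binomial_weight a b n" and ?v = "central_potential n"
  obtain m where m: "(\<Sum>k<n. ?w k * (?v (Suc k) - ?v k)) = 2 * int n * m"
    using dvd_sum_binomial_weight_mult_potential_diff[OF assms(2), of a b] by (elim dvdE)
  have "(\<Sum>k = 0..n - 1. (of_int (int (n - 1)) gchoose k) ^ a
        * (of_int (- int n - 1) gchoose k) ^ b
        * (of_int (2 * int k) gchoose k) * of_int (int k + 2) * 3 ^ (n - 1 - k))
      = (\<Sum>k<n. (of_int (?w k * (?v (Suc k) - ?v k)) :: rat))"
  proof (rule sum.cong)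
    show "{0..n - 1} = {..<n}" using assms(2) by auto
  qed (rule summand_eq_binomial_weight_mult_potential_diff[OF assms(1)], simp)
  also have "\<dots> = of_int (2 * int n * m)"
    by (simp only: of_int_sum [symmetric] m)
  finally show ?thesis by blast
qed

end
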